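(* Let $(M,d)$ be a metric space, $\mathsf{P}\subseteq M$ a set of $n$ points, $1\le\ell\le k\le n$ integers and $m=\lfloor k/\ell\rfloor$. Let $r_{\mathrm{cen}}=\min_{S\subseteq\mathsf{P},|S|=m}\max_{p\in\mathsf{P}} d_S(p,1)$ and $r_{\mathrm{opt}}=\min_{C'\subseteq\mathsf{P},|C'|=k}\max_{p\in\mathsf{P}} d_{C'}(p,\ell)$. Then $r_{\mathrm{cen}}\le 2r_{\mathrm{opt}}$.
   Context: For a finite set $S\subseteq M$, a point $p\in M$ and an integer $1\le i\le|S|$, $d_S(p,i)$ denotes the radius of the smallest closed ball centered at $p$ containing at least $i$ points of $S$. *)

theory Defs
  imports "HOL-Analysis.Analysis"
begin

definition kdist :: "'a::metric_space set \<Rightarrow> 'a \<Rightarrow> nat \<Rightarrow> real" where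
  "kdist S p i = Inf {r. 0 \<le> r \<and> i \<le> card {q \<in> S. dist p q \<le> r}}"

end

theory Submission
  imports Defs
begin

text \<open>Fix a k-subset C realising r_opt =: r, so every point of P has at least l points of C within
  distance r. Greedily pick a maximal set S of points of P that are pairwise more than 2r apart;
  maximality puts every point of P within 2r of S. The closed r-balls around the points of S are
  pairwise disjoint and each contains at least l points of C, so |S| l \<le> k, i.e. |S| \<le> m.
  Padding S with further points of P to size m keeps every p within 2r of a centre, hence
  r_cen \<le> 2r.\<close>

lemma kdist_le:
  assumes "0 \<le> r" and "i \<le> card {q \<in> S. dist p q \<le> r}"
  shows "kdist S p i \<le> r"
  unfolding kdist_def using assms by (intro cInf_lower) (auto simp: bdd_below_def)

lemma kdist_1_le:
  assumes "finite S" and "s \<in> S" and "dist p s \<le> r"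
  shows "kdist S p 1 \<le> r"
proof (rule kdist_le)
  show "0 \<le> r" using assms(3) zero_le_dist order_trans by blast
  have "{q \<in> S. dist p q \<le> r} \<noteq> {}" using assms(2,3) by blast
  then show "1 \<le> card {q \<in> S. dist p q \<le> r}"
    using assms(1) by (simp add: Suc_le_eq card_gt_0_iff)
qed

text \<open>Shrinking a radius to the largest of the finitely many distances below it loses no points,
  so the infimum defining kdist is a minimum over these candidate radii.\<close>

lemma kdist_attained:
  fixes C :: "'a::metric_space set"
  assumes "finite C" and "i \<le> card C"
  shows "0 \<le> kdist C p i" and "i \<le> card {q \<in> C. dist p q \<le> kdist C p i}"
proof -
  define A where "A = {r. 0 \<le> r \<and> i \<le> card {q \<in> C. dist p q \<le> r}}"
  define D where "D = insert 0 (dist p ` C)"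
  have "finite D" using assms(1) by (simp add: D_def)
  have round_down: "\<exists>r'\<in>A \<inter> D. r' \<le> r" if "r \<in> A" for r
  proof -
    define r' where "r' = Max {d \<in> D. d \<le> r}"
    have "{d \<in> D. d \<le> r} \<noteq> {}" using that by (auto simp: D_def A_def)
    then have r': "r' \<in> {d \<in> D. d \<le> r}"
      unfolding r'_def using \<open>finite D\<close> by (intro Max_in) auto
    have r'_max: "d \<le> r'" if "d \<in> D" "d \<le> r" for d
      unfolding r'_def using \<open>finite D\<close> that by (intro Max_ge) auto
    have "{q \<in> C. dist p q \<le> r'} = {q \<in> C. dist p q \<le> r}"
      using r' r'_max by (force simp: D_def)
    moreover have "0 \<le> r'" using r' by (auto simp: D_def)
    ultimately show ?thesis using that r' by (auto simp: A_def)
  qed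
  have "Max D \<in> A"
  proof -
    have "{q \<in> C. dist p q \<le> Max D} = C" and "0 \<le> Max D"
      using \<open>finite D\<close> by (auto simp: D_def)
    then show ?thesis using assms(2) by (simp add: A_def)
  qed
  then have ne: "A \<inter> D \<noteq> {}" using round_down by blast
  have fin: "finite (A \<inter> D)" using \<open>finite D\<close> by simp
  have "kdist C p i = Min (A \<inter> D)"
  proof (rule antisym)
    show "kdist C p i \<le> Min (A \<inter> D)"
      unfolding kdist_def A_def[symmetric] using Min_in[OF fin ne]
      by (intro cInf_lower) (auto simp: A_def bdd_below_def)
    show "Min (A \<inter> D) \<le> kdist C p i"
      unfolding kdist_def A_def[symmetric] using ne round_down fin
      by (intro cInf_greatest) (auto, meson Min_le order_trans)
  qed
  then have "kdist C p i \<in> A" using Min_in[OF fin ne] by simp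
  then show "0 \<le> kdist C p i" and "i \<le> card {q \<in> C. dist p q \<le> kdist C p i}"
    by (simp_all add: A_def)
qed

lemma card_le_if_kdist_le:
  fixes C :: "'a::metric_space set"
  assumes "finite C" and "i \<le> card C" and "kdist C p i \<le> r"
  shows "i \<le> card {q \<in> C. dist p q \<le> r}"
proof -
  have "card {q \<in> C. dist p q \<le> kdist C p i} \<le> card {q \<in> C. dist p q \<le> r}"
    using assms by (intro card_mono) auto
  then show ?thesis using kdist_attained(2)[OF assms(1,2), of p] by linarith
qed

definition separated :: "real \<Rightarrow> 'a::metric_space set \<Rightarrow> bool" where
  "separated \<delta> S \<longleftrightarrow> (\<forall>a\<in>S. \<forall>b\<in>S. a \<noteq> b \<longrightarrow> \<delta> < dist a b)"

lemma exists_separated_net: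
  fixes P :: "'a::metric_space set"
  assumes "finite P" and "0 \<le> \<delta>"
  shows "\<exists>S \<subseteq> P. separated \<delta> S \<and> (\<forall>p\<in>P. \<exists>s\<in>S. dist p s \<le> \<delta>)"
  using assms(1)
proof (induction P rule: finite_induct)
  case empty
  show ?case by (simp add: separated_def)
next
  case (insert x P)
  then obtain S where S: "S \<subseteq> P" "separated \<delta> S" "\<forall>p\<in>P. \<exists>s\<in>S. dist p s \<le> \<delta>"
    by blast
  show ?case
  proof (cases "\<exists>s\<in>S. dist x s \<le> \<delta>")
    case True
    then show ?thesis using S by blast
  next
    case False
    then have "separated \<delta> (insert x S)"
      using S(2) by (auto simp: separated_def dist_commute not_le)
    then show ?thesis using S assms(2) by (intro exI[of _ "insert x S"]) auto
  qed
qed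

lemma card_separated_mult_le:
  fixes C S :: "'a::metric_space set"
  assumes "finite C" and "finite S" and "separated (2 * r) S"
    and "\<And>s. s \<in> S \<Longrightarrow> l \<le> card {q \<in> C. dist s q \<le> r}"
  shows "card S * l \<le> card C"
proof -
  define B where "B s = {q \<in> C. dist s q \<le> r}" for s
  have "disjoint_family_on B S"
    unfolding disjoint_family_on_def
  proof (intro ballI impI)
    fix a b assume ab: "a \<in> S" "b \<in> S" "a \<noteq> b"
    show "B a \<inter> B b = {}"
    proof (rule ccontr)
      assume "B a \<inter> B b \<noteq> {}"
      then obtain q where "dist a q \<le> r" "dist b q \<le> r" unfolding B_def by auto
      then have "dist a b \<le> 2 * r" using dist_triangle[of a b q] by (simp add: dist_commute)
      then show False using ab assms(3) unfolding separated_def by force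
    qed
  qed
  have "card S * l = (\<Sum>s\<in>S. l)" by simp
  also have "\<dots> \<le> (\<Sum>s\<in>S. card (B s))"
    using assms(4) unfolding B_def by (intro sum_mono) auto
  also have "\<dots> = card (\<Union>s\<in>S. B s)"
    using card_UN_disjoint'[OF \<open>disjoint_family_on B S\<close> _ assms(2)] assms(1)
    unfolding B_def by simp
  also have "\<dots> \<le> card C" using assms(1) by (intro card_mono) (auto simp: B_def)
  finally show ?thesis .
qed

lemma exists_centres_within_twice:
  fixes P C :: "'a::metric_space set"
  assumes "finite P" and "C \<subseteq> P" and "1 \<le> l" and "l \<le> card C"
    and "\<And>p. p \<in> P \<Longrightarrow> kdist C p l \<le> r"
  shows "\<exists>S \<subseteq> P. card S = card C div l \<and> (\<forall>p\<in>P. kdist S p 1 \<le> 2 * r)"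
proof -
  have "finite C" using assms(1,2) finite_subset by blast
  have "C \<noteq> {}" using assms(3,4) by auto
  then obtain c where "c \<in> P" using assms(2) by blast
  have "0 \<le> kdist C c l" using kdist_attained(1)[OF \<open>finite C\<close> assms(4)] .
  then have "0 \<le> 2 * r" using assms(5)[OF \<open>c \<in> P\<close>] by linarith
  then obtain S where S: "S \<subseteq> P" "separated (2 * r) S" "\<forall>p\<in>P. \<exists>s\<in>S. dist p s \<le> 2 * r"
    using exists_separated_net[OF assms(1)] by blast
  have "finite S" using S(1) assms(1) finite_subset by blast
  have "card S * l \<le> card C"
    using assms(2,4,5) S(1) \<open>finite C\<close>
    by (intro card_separated_mult_le[OF \<open>finite C\<close> \<open>finite S\<close> S(2)] card_le_if_kdist_le) auto
  then have "card S \<le> card C div l"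
    using assms(3) by (simp add: less_eq_div_iff_mult_less_eq)
  moreover have "card C div l \<le> card P"
    using card_mono[OF assms(1,2)] by (meson div_le_dividend order_trans)
  ultimately obtain T where T: "S \<subseteq> T" "T \<subseteq> P" "card T = card C div l"
    using exists_subset_between[OF _ _ S(1) assms(1)] by blast
  have "finite T" using T(2) assms(1) finite_subset by blast
  have "kdist T p 1 \<le> 2 * r" if "p \<in> P" for p
    using S(3) that T(1) kdist_1_le[OF \<open>finite T\<close>] by blast
  then show ?thesis using T by blast
qed

theorem mainTheorem7:
  fixes P :: "'a::metric_space set" and n k l m :: nat
  assumes "finite P" and "card P = n"
    and "1 \<le> l" and "l \<le> k" and "k \<le> n"
    and "m = k div l"
  shows "Min {Max ((\<lambda>p. kdist S p 1) ` P) | S. S \<subseteq> P \<and> card S = m}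
         \<le> 2 * Min {Max ((\<lambda>p. kdist C p l) ` P) | C. C \<subseteq> P \<and> card C = k}"
proof -
  let ?R = "{Max ((\<lambda>p. kdist C p l) ` P) | C. C \<subseteq> P \<and> card C = k}"
  obtain C0 where "C0 \<subseteq> P" "card C0 = k"
    using obtain_subset_with_card_n[of k P] assms(2,5) by blast
  then have "?R \<noteq> {}" by blast
  then have "Min ?R \<in> ?R" using assms(1) by (intro Min_in) simp_all
  then obtain C where C: "C \<subseteq> P" "card C = k"
    and r: "Min ?R = Max ((\<lambda>p. kdist C p l) ` P)"
    by blast
  have "P \<noteq> {}" using C assms(3,4) by auto
  have "\<And>p. p \<in> P \<Longrightarrow> kdist C p l \<le> Min ?R"
    unfolding r using assms(1) by simp
  then obtain S where S: "S \<subseteq> P" "card S = m" "\<forall>p\<in>P. kdist S p 1 \<le> 2 * Min ?R"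
    using exists_centres_within_twice[OF assms(1) C(1) assms(3)] C(2) assms(4,6) by blast
  have "Min {Max ((\<lambda>p. kdist S p 1) ` P) | S. S \<subseteq> P \<and> card S = m}
      \<le> Max ((\<lambda>p. kdist S p 1) ` P)"
    using S(1,2) assms(1) by (intro Min_le) auto
  also have "\<dots> \<le> 2 * Min ?R"
    using S(3) assms(1) \<open>P \<noteq> {}\<close> by simp
  finally show ?thesis .
qed

end
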